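(* Let $(Q,\cdot)$ be a groupoid of order $n$ with elements ordered as $q_1,\dots,q_n$, which is $k$-translatable with respect to this ordering ($1\le k<n$) and contains a cancellable element. Then $Q$ is a quasigroup if and only if $\gcd(k,n)=1$.
   Context: An element $c$ is cancellable if $cx=cy\Rightarrow x=y$ and $xc=yc\Rightarrow x=y$. A finite groupoid with ordering $q_1,\dots,q_n$ is $k$-translatable with respect to this ordering if $q_i\cdot q_j=q_{i-1}\cdot q_{j-k}$ for all $i\in\{2,\dots,n\}$, $j\in\{1,\dots,n\}$, indices taken modulo $n$ in $\{1,\dots,n\}$. *)

theory Defs
  imports Main
begin

definition modn :: "int \<Rightarrow> nat \<Rightarrow> nat" where
  "modn i n = nat ((i - 1) mod int n) + 1"

definition groupoid :: "'a set \<Rightarrow> ('a \<Rightarrow> 'a \<Rightarrow> 'a) \<Rightarrow> bool" where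
  "groupoid Q f \<longleftrightarrow> (\<forall>x\<in>Q. \<forall>y\<in>Q. f x y \<in> Q)"

definition cancellable :: "'a set \<Rightarrow> ('a \<Rightarrow> 'a \<Rightarrow> 'a) \<Rightarrow> 'a \<Rightarrow> bool" where
  "cancellable Q f c \<longleftrightarrow> c \<in> Q \<and>
     (\<forall>x\<in>Q. \<forall>y\<in>Q. f c x = f c y \<longrightarrow> x = y) \<and>
     (\<forall>x\<in>Q. \<forall>y\<in>Q. f x c = f y c \<longrightarrow> x = y)"

definition quasigroup :: "'a set \<Rightarrow> ('a \<Rightarrow> 'a \<Rightarrow> 'a) \<Rightarrow> bool" where
  "quasigroup Q f \<longleftrightarrow> groupoid Q f \<and>
     (\<forall>a\<in>Q. \<forall>b\<in>Q. (\<exists>!x. x \<in> Q \<and> f a x = b) \<and> (\<exists>!y. y \<in> Q \<and> f y a = b))"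

(* q : {1..n} -> Q is the ordering q_1,...,q_n *)
definition k_translatable ::
  "'a set \<Rightarrow> ('a \<Rightarrow> 'a \<Rightarrow> 'a) \<Rightarrow> nat \<Rightarrow> (nat \<Rightarrow> 'a) \<Rightarrow> nat \<Rightarrow> bool" where
  "k_translatable Q f n q k \<longleftrightarrow>
     (\<forall>i\<in>{2..n}. \<forall>j\<in>{1..n}.
        f (q i) (q j) = f (q (i - 1)) (q (modn (int j - int k) n)))"

end

theory Submission
  imports Defs
begin

text \<open>
Unrolling the translatability identity shows that row \<open>i\<close> of the multiplication table is
row 1 cyclically shifted by \<open>(i - 1) k\<close> positions (indices mod \<open>n\<close>). A left cancellable
element makes its row, hence row 1, hence every row injective. Column \<open>j\<close> then lists the
entries of row 1 at the positions \<open>j - (i - 1) k\<close>, which are pairwise distinct exactly when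
multiplication by \<open>k\<close> is injective modulo \<open>n\<close>, i.e. when \<open>gcd k n = 1\<close>. A right cancellable
element has an injective column, so \<open>gcd k n = 1\<close>; then all rows and columns of the finite
table are injective and \<open>Q\<close> is a quasigroup. So under these hypotheses both sides of the
equivalence are true.
\<close>

lemma modn_in_range: "0 < n \<Longrightarrow> modn s n \<in> {1..n}"
  unfolding modn_def by (simp add: Suc_le_eq nat_less_iff)

lemma modn_of_nat: "j \<in> {1..n} \<Longrightarrow> modn (int j) n = j"
  unfolding modn_def by (auto simp: nat_diff_distrib)

lemma int_modn_mod: "0 < n \<Longrightarrow> int (modn s n) mod int n = s mod int n"
proof -
  assume "0 < n"
  then have "int (modn s n) = (s - 1) mod int n + 1"
    unfolding modn_def by simp
  then show ?thesis
    by (metis diff_add_cancel mod_add_left_eq)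
qed

lemma modn_eq_iff:
  assumes "0 < n"
  shows "modn s n = modn t n \<longleftrightarrow> s mod int n = t mod int n"
proof
  assume "modn s n = modn t n"
  then show "s mod int n = t mod int n"
    using int_modn_mod[OF assms] by metis
next
  assume "s mod int n = t mod int n"
  then have "(s - 1) mod int n = (t - 1) mod int n"
    by (metis mod_diff_left_eq)
  then show "modn s n = modn t n"
    by (simp add: modn_def)
qed

lemma modn_int_modn_diff: "0 < n \<Longrightarrow> modn (int (modn s n) - t) n = modn (s - t) n"
  by (simp only: modn_eq_iff mod_diff_cong[OF int_modn_mod refl])

lemma eq_if_int_mod_eq:
  assumes "i \<in> {1..n}" "j \<in> {1..n}" "int i mod int n = int j mod int n"
  shows "i = j"
  using assms modn_eq_iff[of n "int i" "int j"] modn_of_nat by force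

lemma inj_on_mult_mod_iff_coprime:
  assumes "0 < n"
  shows "inj_on (\<lambda>i. (int i * int k) mod int n) {1..n} \<longleftrightarrow> coprime k n"
proof
  assume inj: "inj_on (\<lambda>i. (int i * int k) mod int n) {1..n}"
  show "coprime k n"
  proof (rule ccontr)
    assume "\<not> coprime k n"
    define d where "d = gcd k n"
    have "d dvd n" "d dvd k" "d \<noteq> 1"
      using \<open>\<not> coprime k n\<close> by (auto simp: d_def coprime_iff_gcd_eq_1)
    moreover have "0 < d"
      using assms by (simp add: d_def)
    ultimately have "d \<le> n" "1 < d"
      using assms by (auto simp: dvd_imp_le)
    then have "1 \<le> n div d" "n div d < n"
      using \<open>0 < n\<close> by (simp_all add: div_greater_zero_iff Suc_le_eq)
    obtain k' where "k = d * k'"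
      using \<open>d dvd k\<close> ..
    \<comment> \<open>\<open>(n div d) * k\<close> is a multiple of \<open>n\<close>, so positions \<open>1\<close> and \<open>1 + n div d\<close> collide\<close>
    then have "n div d * k = n * k'"
      using \<open>d dvd n\<close> by (simp add: mult.assoc[symmetric])
    then have "int (n div d) * int k = int n * int k'"
      by (metis of_nat_mult)
    then have "(int (1 + n div d) * int k) mod int n = (int 1 * int k) mod int n"
      by (simp add: distrib_right)
    then have "1 + n div d = 1"
      using \<open>n div d < n\<close> assms by (intro inj_onD[OF inj]) auto
    with \<open>1 \<le> n div d\<close> show False
      by simp
  qed
next
  assume cop: "coprime k n"
  show "inj_on (\<lambda>i. (int i * int k) mod int n) {1..n}"
  proof (rule inj_onI)
    fix i j
    assume ij: "i \<in> {1..n}" "j \<in> {1..n}" and "(int i * int k) mod int n = (int j * int k) mod int n"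
    then have "int n dvd int i * int k - int j * int k"
      by (simp only: mod_eq_dvd_iff)
    then have "int n dvd (int i - int j) * int k"
      by (simp only: left_diff_distrib)
    moreover have "coprime (int n) (int k)"
      using cop by (simp add: coprime_commute)
    ultimately have "int n dvd int i - int j"
      using coprime_dvd_mult_left_iff by blast
    then have "int i mod int n = int j mod int n"
      by (simp only: mod_eq_dvd_iff)
    then show "i = j"
      using ij by (rule eq_if_int_mod_eq[rotated 2])
  qed
qed

lemma finite_quasigroupI:
  assumes "finite Q" "groupoid Q f"
    and rows: "\<And>a. a \<in> Q \<Longrightarrow> inj_on (f a) Q"
    and columns: "\<And>a. a \<in> Q \<Longrightarrow> inj_on (\<lambda>x. f x a) Q"
  shows "quasigroup Q f"
proof -
  have unique_solution: "\<exists>!x. x \<in> Q \<and> g x = b"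
    if "inj_on g Q" "g ` Q \<subseteq> Q" "b \<in> Q" for g :: "'a \<Rightarrow> 'a" and b
  proof -
    have "b \<in> g ` Q"
      using endo_inj_surj[OF \<open>finite Q\<close> that(2,1)] that(3) by simp
    then show ?thesis
      using inj_onD[OF that(1)] by blast
  qed
  show ?thesis
    unfolding quasigroup_def
  proof (intro conjI ballI)
    fix a b
    assume "a \<in> Q" "b \<in> Q"
    then show "\<exists>!x. x \<in> Q \<and> f a x = b" "\<exists>!y. y \<in> Q \<and> f y a = b"
      using unique_solution rows columns \<open>groupoid Q f\<close> unfolding groupoid_def
      by (simp_all add: image_subset_iff)
  qed (fact \<open>groupoid Q f\<close>)
qed

lemma inj_on_iff_inj_on_indices:
  "bij_betw q A B \<Longrightarrow> inj_on g B \<longleftrightarrow> inj_on (\<lambda>x. g (q x)) A"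
  using comp_inj_on_iff[of q A g] by (simp add: bij_betw_def comp_def)

lemma k_translatable_row_shift:
  assumes kt: "k_translatable Q f n q k" and "i \<in> {1..n}" "j \<in> {1..n}"
  shows "f (q i) (q j) = f (q 1) (q (modn (int j - (int i - 1) * int k) n))"
proof -
  have n: "0 < n"
    using assms by simp
  have shifted: "f (q (Suc m)) (q j) = f (q 1) (q (modn (int j - int m * int k) n))"
    if "Suc m \<le> n" "j \<in> {1..n}" for m j
    using that
  proof (induction m arbitrary: j)
    case 0
    then show ?case
      by (simp add: modn_of_nat)
  next
    case (Suc m)
    have "f (q (Suc (Suc m))) (q j) = f (q (Suc m)) (q (modn (int j - int k) n))"
      using kt Suc.prems unfolding k_translatable_def by auto
    also have "\<dots> = f (q 1) (q (modn (int (modn (int j - int k) n) - int m * int k) n))"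
      using Suc.IH Suc.prems(1) modn_in_range[OF n] by simp
    also have "\<dots> = f (q 1) (q (modn (int j - int (Suc m) * int k) n))"
      by (simp add: modn_int_modn_diff[OF n] algebra_simps)
    finally show ?case .
  qed
  moreover have "Suc (i - 1) = i" "int (i - 1) = int i - 1" "Suc (i - 1) \<le> n"
    using \<open>i \<in> {1..n}\<close> by auto
  ultimately show ?thesis
    using shifted[of "i - 1" j] \<open>j \<in> {1..n}\<close> by simp
qed

lemma k_translatable_first_row_inj:
  assumes kt: "k_translatable Q f n q k" and q: "bij_betw q {1..n} Q"
    and a: "a \<in> {1..n}" and left_cancel: "inj_on (f (q a)) Q"
  shows "inj_on (\<lambda>j. f (q 1) (q j)) {1..n}"
proof (rule inj_onI)
  fix j j'
  assume j: "j \<in> {1..n}" "j' \<in> {1..n}" and eq: "f (q 1) (q j) = f (q 1) (q j')"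
  have n: "0 < n"
    using a by simp
  define shift where "shift j = modn (int j + (int a - 1) * int k) n" for j
  have shift_in_range: "shift j \<in> {1..n}" for j
    unfolding shift_def by (rule modn_in_range[OF n])
  have first_row: "f (q 1) (q j) = f (q a) (q (shift j))" if "j \<in> {1..n}" for j
    using k_translatable_row_shift[OF kt a shift_in_range] that
    by (simp add: shift_def modn_int_modn_diff[OF n] modn_of_nat)
  have "q (shift j) \<in> Q" "q (shift j') \<in> Q"
    using q shift_in_range by (auto simp: bij_betw_def)
  then have "q (shift j) = q (shift j')"
    using inj_onD[OF left_cancel] eq first_row j by metis
  then have "shift j = shift j'"
    using bij_betw_imp_inj_on[OF q] shift_in_range by (auto dest: inj_onD)
  then have "int j mod int n = int j' mod int n"
    by (simp add: shift_def modn_eq_iff[OF n] mod_eq_dvd_iff)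
  then show "j = j'"
    using j eq_if_int_mod_eq by blast
qed

lemma k_translatable_products_eq_iff:
  assumes kt: "k_translatable Q f n q k" and row1: "inj_on (\<lambda>j. f (q 1) (q j)) {1..n}"
    and "i \<in> {1..n}" "j \<in> {1..n}" "i' \<in> {1..n}" "j' \<in> {1..n}"
  shows "f (q i) (q j) = f (q i') (q j') \<longleftrightarrow>
    (int j - int i * int k) mod int n = (int j' - int i' * int k) mod int n"
proof -
  have n: "0 < n"
    using assms by simp
  let ?s = "int j - (int i - 1) * int k" and ?t = "int j' - (int i' - 1) * int k"
  have "f (q i) (q j) = f (q i') (q j') \<longleftrightarrow> f (q 1) (q (modn ?s n)) = f (q 1) (q (modn ?t n))"
    using k_translatable_row_shift[OF kt] assms by simp
  also have "\<dots> \<longleftrightarrow> modn ?s n = modn ?t n"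
    by (rule inj_on_eq_iff[OF row1 modn_in_range[OF n] modn_in_range[OF n]])
  also have "\<dots> \<longleftrightarrow> int n dvd ?s - ?t"
    by (simp only: modn_eq_iff[OF n] mod_eq_dvd_iff)
  also have "?s - ?t = (int j - int i * int k) - (int j' - int i' * int k)"
    by (simp add: algebra_simps)
  finally show ?thesis
    by (simp only: mod_eq_dvd_iff)
qed

lemma k_translatable_row_inj:
  assumes kt: "k_translatable Q f n q k" and row1: "inj_on (\<lambda>j. f (q 1) (q j)) {1..n}"
    and i: "i \<in> {1..n}"
  shows "inj_on (\<lambda>j. f (q i) (q j)) {1..n}"
proof (rule inj_onI)
  fix j j'
  assume j: "j \<in> {1..n}" "j' \<in> {1..n}" and "f (q i) (q j) = f (q i) (q j')"
  then have "int n dvd (int j - int i * int k) - (int j' - int i * int k)"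
    using k_translatable_products_eq_iff[OF kt row1 i j(1) i j(2)] by (simp add: mod_eq_dvd_iff)
  then have "int j mod int n = int j' mod int n"
    by (simp add: mod_eq_dvd_iff)
  then show "j = j'"
    using j by (rule eq_if_int_mod_eq[rotated 2])
qed

lemma k_translatable_column_inj_iff:
  assumes kt: "k_translatable Q f n q k" and row1: "inj_on (\<lambda>j. f (q 1) (q j)) {1..n}"
    and j: "j \<in> {1..n}"
  shows "inj_on (\<lambda>i. f (q i) (q j)) {1..n} \<longleftrightarrow> coprime k n"
proof -
  have "f (q i) (q j) = f (q i') (q j) \<longleftrightarrow> (int i * int k) mod int n = (int i' * int k) mod int n"
    if "i \<in> {1..n}" "i' \<in> {1..n}" for i i'
  proof -
    have "(int j - int i * int k) - (int j - int i' * int k) = - (int i * int k - int i' * int k)"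
      by simp
    then show ?thesis
      using k_translatable_products_eq_iff[OF kt row1 that(1) j that(2) j]
      by (simp only: mod_eq_dvd_iff dvd_minus_iff)
  qed
  then have "inj_on (\<lambda>i. f (q i) (q j)) {1..n} \<longleftrightarrow> inj_on (\<lambda>i. (int i * int k) mod int n) {1..n}"
    unfolding inj_on_def by blast
  also have "\<dots> \<longleftrightarrow> coprime k n"
    using j by (intro inj_on_mult_mod_iff_coprime) simp
  finally show ?thesis .
qed

theorem proposition8p8:
  fixes Q :: "'a set" and f :: "'a \<Rightarrow> 'a \<Rightarrow> 'a" and q :: "nat \<Rightarrow> 'a" and n k :: nat
  assumes "groupoid Q f"
    and "bij_betw q {1..n} Q"
    and "1 \<le> k" and "k < n"
    and "k_translatable Q f n q k"
    and "\<exists>c\<in>Q. cancellable Q f c"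
  shows "quasigroup Q f \<longleftrightarrow> gcd k n = 1"
proof -
  note q = \<open>bij_betw q {1..n} Q\<close> and kt = \<open>k_translatable Q f n q k\<close>
  have Q: "Q = q ` {1..n}"
    using q by (simp add: bij_betw_def)
  obtain a where a: "a \<in> {1..n}" "cancellable Q f (q a)"
    using \<open>\<exists>c\<in>Q. cancellable Q f c\<close> Q by auto
  then have "inj_on (f (q a)) Q" "inj_on (\<lambda>x. f x (q a)) Q"
    unfolding cancellable_def by (auto intro: inj_onI)
  have row1: "inj_on (\<lambda>j. f (q 1) (q j)) {1..n}"
    by (rule k_translatable_first_row_inj[OF kt q a(1) \<open>inj_on (f (q a)) Q\<close>])
  note column_inj_iff = k_translatable_column_inj_iff[OF kt row1]
  have "coprime k n"
    using \<open>inj_on (\<lambda>x. f x (q a)) Q\<close> column_inj_iff[OF a(1)]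
      inj_on_iff_inj_on_indices[OF q, of "\<lambda>x. f x (q a)"]
    by simp
  have "quasigroup Q f"
  proof (rule finite_quasigroupI)
    show "finite Q" "groupoid Q f"
      using Q \<open>groupoid Q f\<close> by simp_all
  next
    fix x
    assume "x \<in> Q"
    then obtain i where i: "i \<in> {1..n}" "x = q i"
      using Q by blast
    show "inj_on (f x) Q"
      using k_translatable_row_inj[OF kt row1 i(1)] inj_on_iff_inj_on_indices[OF q, of "f x"] i(2)
      by simp
    show "inj_on (\<lambda>y. f y x) Q"
      using column_inj_iff[OF i(1)] \<open>coprime k n\<close>
        inj_on_iff_inj_on_indices[OF q, of "\<lambda>y. f y x"] i(2)
      by simp
  qed
  with \<open>coprime k n\<close> show ?thesis
    by (simp add: coprime_iff_gcd_eq_1)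
qed

end
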